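(* Consider the following decoding setting (all notation is fixed in the context). Let $t_j = |\mathcal{A}_j|$ be the number of users transmitting in sub-block $j$, and run the index-collision-resolution procedure with the estimate $\hat{t}_j = t_j$. Assume that (no $E_1$) $t_j \le T$, and that (no $E_2$) whenever, during this run, the decoder $D$ of $\mathcal{C}$ is applied to a vector of the form $[\mathbf{c} + \tilde{\mathbf{z}}_j/2^{\ell}] \bmod 2$ with $\mathbf{c}\in\mathcal{C}$ and $\ell$ a nonnegative integer, it outputs $\mathbf{c}$. Then: (i) the list $\mathcal{L}_j(t_j)$ contains all indices $u \in \{1,\dots,n_p\}$ that were transmitted exactly once in sub-block $j$ (i.e., $|\{i\in\mathcal{A}_j : u_i = u\}| = 1$); (ii) $\hat{\mathbf{z}}_j(t_j) = \mathbf{z}_j$.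
   Context: Codes. Let $\mathbf{H}\in\{0,1\}^{m_p\times n_p}$ be a parity-check matrix of a binary linear code $\mathcal{C}_{\mathrm{aux}}$ of length $n_p$ with minimum Hamming distance $d$, and let $T=\lfloor (d-1)/2\rfloor$; denote the $u$-th column of $\mathbf{H}$ by $\mathbf{h}_u$. Let $\mathbf{G}\in\{0,1\}^{m_p\times n}$ be a generator matrix (full row rank) of a binary linear code $\mathcal{C}$ of length $n$ and dimension $m_p$. For $u\in\{1,\dots,n_p\}$ put $\mathbf{c}(u) = \mathbf{h}_u^T\mathbf{G} \bmod 2$ and define the real signal $\mathbf{x}(u)\in\mathbb{R}^n$ componentwise by $\mathbf{x}(u)_k = 2a(\mathbf{c}(u)_k - 1/2)$, where $a>0$ is a fixed constant. Channel. In sub-block $j$, a finite set $\mathcal{A}_j$ of users transmits; user $i\in\mathcal{A}_j$ chose an index $u_i\in\{1,\dots,n_p\}$ and sends $\mathbf{x}_{i,j}=\mathbf{x}(u_i)$. The received vector is $\mathbf{y}_j = \sum_{i\in\mathcal{A}_j}\mathbf{x}(u_i) + \mathbf{z}_j$ with $\mathbf{z}_j\in\mathbb{R}^n$ a noise vector; put $\tilde{\mathbf{z}}_j = \mathbf{z}_j/(2a)$. Here "$\bmod 2$" on real vectors is componentwise reduction into $[0,2)$. Basic decoder $\Phi$. For $\mathbf{y}\in\mathbb{R}^n$ and integer $\hat t\ge 0$, $\Phi(\mathbf{y},\hat t)$ is computed as: form $\tilde{\mathbf{y}} = [\mathbf{y}/(2a) + \hat t/2]\bmod 2$; apply a decoder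 $D$ for $\mathcal{C}$ to $\tilde{\mathbf{y}}$, obtaining a codeword $\tilde{\mathbf{c}}$ (or a flagged error); recover the unique $\tilde{\mathbf{h}}\in\{0,1\}^{m_p}$ with $\tilde{\mathbf{h}}^T\mathbf{G}=\tilde{\mathbf{c}} \bmod 2$; apply the bounded-distance syndrome decoder of $\mathcal{C}_{\mathrm{aux}}$, which returns the (unique) set $S\subseteq\{1,\dots,n_p\}$ with $|S|\le T$ and $\sum_{u\in S}\mathbf{h}_u = \tilde{\mathbf{h}} \bmod 2$ if such a set exists, and flags an error otherwise. $\Phi(\mathbf{y},\hat t)$ is the returned set $S$ (a list of indices); if any step flags an error, $\Phi$ returns $\emptyset$ and flags an error. Index-collision-resolution (ICR) procedure for an estimate $\hat t_j$: set $\mathbf{y}^{(1)}_j=\mathbf{y}_j$, $\hat t^{(1)}_j=\hat t_j$, $\mathcal{L}^{(1)}=\Phi(\mathbf{y}^{(1)}_j,\hat t^{(1)}_j)$. For $\ell\ge1$: if $|\mathcal{L}^{(\ell)}|=\hat t^{(\ell)}_j$, stop and return $\mathcal{L}^{(1)},\dots,\mathcal{L}^{(\ell)}$, setting $\tau=\ell$; if $|\mathcal{L}^{(\ell)}|>\hat t^{(\ell)}_j$, return an error; if $|\mathcal{L}^{(\ell)}|<\hat t^{(\ell)}_j$, set $\hat t^{(\ell+1)}_j=(\hat t^{(\ell)}_j-|\mathcal{L}^{(\ell)}|)/2$, return an error if this is not an integer, and otherwise set $\mathbf{y}^{(\ell+1)}_j = \big(\mathbf{y}^{(\ell)}_j-\sum_{u\in\mathcal{L}^{(\ell)}}\mathbf{x}(u)\big)/2$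 and $\mathcal{L}^{(\ell+1)}=\Phi(\mathbf{y}^{(\ell+1)}_j,\hat t^{(\ell+1)}_j)$, and continue. If no error is returned, the outputs are $\mathcal{L}_j(\hat t_j)=\mathcal{L}^{(1)}\setminus\bigcup_{\ell=2}^{\tau}\mathcal{L}^{(\ell)}$ and $\hat{\mathbf{z}}_j(\hat t_j)=\mathbf{y}_j-\sum_{\ell=1}^{\tau}2^{\ell-1}\sum_{u\in\mathcal{L}^{(\ell)}}\mathbf{x}(u)$. *)

theory Defs
  imports "HOL-Analysis.Analysis" "HOL-Library.Z2"
begin

(* Binary vectors/matrices are over the field bit = GF(2) (HOL-Library.Z2), so "mod 2"
   on binary quantities is built in.  The index set {1..n_p} is the finite type 'p,
   coordinates {1..n} the finite type 'n, rows {1..m_p} the finite type 'm. *)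

definition hweight :: "bit^'p \<Rightarrow> nat" where
  "hweight x = card {i. x $ i \<noteq> 0}"

definition caux :: "bit^'p^'m \<Rightarrow> (bit^'p) set" where
  "caux H = {x. H *v x = 0}"

definition is_min_dist :: "bit^'p^'m \<Rightarrow> nat \<Rightarrow> bool" where
  "is_min_dist H d \<longleftrightarrow>
     (\<exists>x\<in>caux H. x \<noteq> 0 \<and> hweight x = d) \<and> (\<forall>x\<in>caux H. x \<noteq> 0 \<longrightarrow> d \<le> hweight x)"

definition code :: "bit^'n^'m \<Rightarrow> (bit^'n) set" where
  "code G = range (\<lambda>h. h v* G)"

definition bvec_real :: "bit^'n \<Rightarrow> real^'n" where
  "bvec_real c = (\<chi> k. of_bit (c $ k))"

definition rmod2 :: "real \<Rightarrow> real" where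
  "rmod2 r = r - 2 * of_int \<lfloor>r / 2\<rfloor>"

definition rmod2v :: "real^'n \<Rightarrow> real^'n" where
  "rmod2v v = (\<chi> k. rmod2 (v $ k))"

definition cw :: "bit^'n^'m \<Rightarrow> bit^'p^'m \<Rightarrow> 'p \<Rightarrow> bit^'n" where
  "cw G H u = column u H v* G"

definition xsig :: "bit^'n^'m \<Rightarrow> bit^'p^'m \<Rightarrow> real \<Rightarrow> 'p \<Rightarrow> real^'n" where
  "xsig G H a u = (\<chi> k. 2 * a * (of_bit (cw G H u $ k) - 1/2))"

definition dinput :: "real \<Rightarrow> real^'n \<Rightarrow> nat \<Rightarrow> real^'n" where
  "dinput a y t = rmod2v ((1 / (2 * a)) *\<^sub>R y + (\<chi> k. real t / 2))"

definition synd :: "bit^'p^'m \<Rightarrow> 'p set \<Rightarrow> bit^'m" where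
  "synd H S = (\<Sum>u\<in>S. column u H)"

(* basic decoder Phi; returns the empty set when an error is flagged.
   D returns None to flag an error. *)
definition phi :: "(real^'n \<Rightarrow> (bit^'n) option) \<Rightarrow> bit^'n^'m \<Rightarrow> bit^'p^'m \<Rightarrow> nat \<Rightarrow> real
                   \<Rightarrow> real^'n \<Rightarrow> nat \<Rightarrow> 'p set" where
  "phi D G H T a y t =
     (case D (dinput a y t) of
        None \<Rightarrow> {}
      | Some c \<Rightarrow>
          (if \<exists>!h. h v* G = c then
             (let h = (THE h. h v* G = c) in
               (if \<exists>!S. card S \<le> T \<and> synd H S = h
                then (THE S. card S \<le> T \<and> synd H S = h) else {}))
           else {}))"

(* the ICR procedure: returns the trace of iterations (y^(l), t^(l), L^(l)), l = 1..tau,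
   together with a flag that is True iff no error was returned *)
function icr :: "(real^'n \<Rightarrow> (bit^'n) option) \<Rightarrow> bit^'n^'m \<Rightarrow> bit^'p^'m \<Rightarrow> nat \<Rightarrow> real
                 \<Rightarrow> real^'n \<Rightarrow> nat \<Rightarrow> ((real^'n) \<times> nat \<times> 'p set) list \<times> bool" where
  "icr D G H T a y t =
     (let L = phi D G H T a y t in
      if card L = t then ([(y, t, L)], True)
      else if card L > t then ([(y, t, L)], False)
      else if odd (t - card L) then ([(y, t, L)], False)
      else (let r = icr D G H T a ((1/2) *\<^sub>R (y - (\<Sum>u\<in>L. xsig G H a u))) ((t - card L) div 2)
            in ((y, t, L) # fst r, snd r)))"
  by pat_completeness auto
termination
  by (relation "Wellfounded.measure (\<lambda>(D, G, H, T, a, y, t). t)") auto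

definition icr_list :: "((real^'n) \<times> nat \<times> 'p set) list \<Rightarrow> 'p set" where
  "icr_list tr = (snd (snd (hd tr))) - (\<Union>l\<in>{1..<length tr}. snd (snd (tr ! l)))"

definition icr_noise :: "bit^'n^'m \<Rightarrow> bit^'p^'m \<Rightarrow> real \<Rightarrow> real^'n
                        \<Rightarrow> ((real^'n) \<times> nat \<times> 'p set) list \<Rightarrow> real^'n" where
  "icr_noise G H a y tr =
     y - (\<Sum>l<length tr. (2 ^ l) *\<^sub>R (\<Sum>u\<in>snd (snd (tr ! l)). xsig G H a u))"

end

theory Submission
  imports Defs
begin

text \<open>Describe the transmitted indices by their multiplicities \<open>cnt v\<close>. After scaling by
\<open>1/(2a)\<close> and shifting by \<open>t/2\<close>, the received word is \<open>\<Sum>v cnt v c(v)\<close> plus scaled noise,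
and its reduction mod 2 is the codeword of the syndrome of the indices of odd multiplicity.
Hence, in the absence of \<open>E\<^sub>2\<close>, \<open>D\<close> returns that codeword and, as there are at most
\<open>t \<le> T\<close> such indices, the syndrome decoder returns exactly the set of odd-multiplicity
indices. Subtracting their signals and halving leaves a received word of the same shape, with
multiplicities \<open>cnt v div 2\<close>, noise \<open>z/2\<close> and the exact estimate \<open>(t - |L|)/2\<close>. So ICR never
fails, every later list only contains indices sent at least twice, and the weighted sum of the
removed signals is exactly the noiseless part of the received word.\<close>

lemma full_rank_imp_right_invertible:
  fixes G :: "'a::field^'n^'m"
  assumes "rank G = CARD('m)"
  shows "\<exists>B. G ** B = mat 1"
  unfolding matrix_right_invertible_independent_rows
proof (rule allI, rule impI)
  fix c :: "'m \<Rightarrow> 'a"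
  assume c: "(\<Sum>i\<in>UNIV. c i *s row i G) = 0"
  let ?R = "range (\<lambda>i. row i G)"
  have finite_R: "finite ?R" by simp
  have dim_R: "vec.dim ?R = CARD('m)"
    using assms by (simp add: row_rank_def_gen rows_def image_def)
  moreover have card_R: "card ?R \<le> CARD('m)"
    using card_image_le[of UNIV "\<lambda>i. row i G"] by simp
  ultimately have indep: "vec.independent ?R"
    by (intro vec.card_le_dim_spanning[OF subset_refl vec.span_superset]) simp_all
  then have "card ?R = CARD('m)"
    using vec.dim_eq_card_independent[OF indep] dim_R by simp
  then have inj_rows: "inj (\<lambda>i. row i G)"
    by (simp add: inj_on_iff_eq_card)
  define u where "u v = c (inv (\<lambda>i. row i G) v)" for v
  have "(\<Sum>v\<in>?R. u v *s v) = (\<Sum>i\<in>UNIV. c i *s row i G)"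
    by (simp add: sum.reindex[OF inj_rows] u_def inv_f_f[OF inj_rows])
  with c have "(\<Sum>v\<in>?R. u v *s v) = 0" by simp
  moreover have "\<not> ((\<exists>v\<in>?R. u v \<noteq> 0) \<and> (\<Sum>v\<in>?R. u v *s v) = 0)"
    using indep unfolding vec.dependent_finite[OF finite_R] not_ex by (rule spec)
  ultimately have "\<forall>v\<in>?R. u v = 0" by blast
  then show "\<forall>i. c i = 0"
    by (simp add: u_def inv_f_f[OF inj_rows])
qed

lemma inj_vector_matrix_mult_if_right_invertible:
  fixes G :: "'a::comm_semiring_1^'n^'m"
  assumes "G ** B = mat 1"
  shows "inj (\<lambda>h. h v* G)"
  by (rule inj_on_inverseI[of _ "\<lambda>c. c v* B"]) (simp add: vector_matrix_mul_assoc assms)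

lemma of_bool_diff_of_bool_bit: "(of_bool P - of_bool Q :: bit) = of_bool (P \<noteq> Q)"
  by (cases P; cases Q) simp_all

lemma synd_eq_matrix_vector_mult: "synd H S = H *v (\<chi> u. of_bool (u \<in> S))"
  unfolding synd_def matrix_mult_sum by (auto intro: sum.mono_neutral_cong_left)

lemma hweight_indicator: "hweight (\<chi> u. of_bool (u \<in> S) :: bit^'p) = card S"
  by (simp add: hweight_def)

lemma synd_inj_on:
  fixes H :: "bit^'p^'m"
  assumes min_weight: "\<forall>x\<in>caux H. x \<noteq> 0 \<longrightarrow> d \<le> hweight x"
  shows "inj_on (synd H) {S. card S \<le> (d - 1) div 2}"
proof (rule inj_onI, rule ccontr)
  fix S1 S2 :: "'p set"
  assume small: "S1 \<in> {S. card S \<le> (d - 1) div 2}" "S2 \<in> {S. card S \<le> (d - 1) div 2}"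
    and eq: "synd H S1 = synd H S2" and ne: "S1 \<noteq> S2"
  define \<Delta> where "\<Delta> = {u. (u \<in> S1) \<noteq> (u \<in> S2)}"
  define x :: "bit^'p" where "x = (\<chi> u. of_bool (u \<in> \<Delta>))"
  have "x = (\<chi> u. of_bool (u \<in> S1)) - (\<chi> u. of_bool (u \<in> S2))"
    by (simp add: vec_eq_iff x_def \<Delta>_def of_bool_diff_of_bool_bit)
  then have "H *v x = synd H S1 - synd H S2"
    by (simp add: synd_eq_matrix_vector_mult matrix_vector_mult_diff_distrib)
  with eq have "x \<in> caux H" by (simp add: caux_def)
  moreover have "\<Delta> \<noteq> {}" using ne by (auto simp: \<Delta>_def)
  then have "x \<noteq> 0" and "0 < card \<Delta>"
    by (auto simp: x_def vec_eq_iff card_gt_0_iff)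
  ultimately have "max d 1 \<le> card \<Delta>"
    using min_weight by (auto simp: hweight_indicator x_def)
  moreover have "\<Delta> \<subseteq> S1 \<union> S2" by (auto simp: \<Delta>_def)
  then have "card \<Delta> \<le> card S1 + card S2"
    by (intro le_trans[OF card_mono card_Un_le]) simp_all
  ultimately show False using small by auto
qed

lemma synd_vector_matrix_mult: "synd H S v* G = (\<Sum>u\<in>S. cw G H u)"
  unfolding synd_def cw_def
  by (induction S rule: infinite_finite_induct) (simp_all add: vector_matrix_left_distrib)

lemma of_nat_bit_eq: "(of_nat n :: bit) = of_bool (odd n)"
  by (subst Z2.bit_eq_iff, simp only: even_of_nat_iff, cases "even n", simp_all)

lemma of_bool_odd_bit [simp]: "of_bool (odd b) = (b :: bit)"
  by (cases b) simp_all

lemma real_of_nat_parity_split: "real n = of_bool (odd n) + 2 * real (n div 2)"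
  by (cases "even n") (auto elim!: evenE oddE)

lemma sum_parity_split:
  fixes cnt :: "'v::finite \<Rightarrow> nat"
  shows "(\<Sum>v\<in>UNIV. cnt v) = card {v. odd (cnt v)} + 2 * (\<Sum>v\<in>UNIV. cnt v div 2)"
proof -
  have "(\<Sum>v\<in>UNIV. cnt v) = (\<Sum>v\<in>UNIV. of_bool (odd (cnt v)) + 2 * (cnt v div 2))"
    by (simp add: of_bool_odd_eq_mod_2)
  also have "\<dots> = card {v. odd (cnt v)} + 2 * (\<Sum>v\<in>UNIV. cnt v div 2)"
    by (subst sum.distrib, subst sum_of_bool_eq) (simp_all add: sum_distrib_left)
  finally show ?thesis .
qed

lemma rmod2_add_even: "rmod2 (r + 2 * real m) = rmod2 r"
proof -
  have "(r + 2 * real m) / 2 = r / 2 + of_int (int m)" by simp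
  then have "\<lfloor>(r + 2 * real m) / 2\<rfloor> = \<lfloor>r / 2\<rfloor> + int m"
    by (simp only: floor_add_int)
  then show ?thesis by (simp add: rmod2_def)
qed

lemma rmod2_of_nat_add: "rmod2 (real n + e) = rmod2 (of_bool (odd n) + e)"
  using rmod2_add_even[of "of_bool (odd n) + e" "n div 2"]
  by (simp add: algebra_simps flip: real_of_nat_parity_split)

lemma rmod2v_sum_bvec_real:
  fixes c :: "'v \<Rightarrow> bit^'n"
  shows "rmod2v ((\<Sum>v\<in>S. real (cnt v) *\<^sub>R bvec_real (c v)) + e)
       = rmod2v (bvec_real (\<Sum>v\<in>S. of_nat (cnt v) *s c v) + e)"
proof (rule vec_eq_iff[THEN iffD2, rule_format])
  fix k
  define N where "N = (\<Sum>v\<in>S. cnt v * of_bit (c v $ k))"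
  have bit_sum: "(\<Sum>v\<in>S. of_nat (cnt v) *s c v) $ k = of_nat N"
    by (simp add: N_def of_nat_sum)
  have real_sum: "(\<Sum>v\<in>S. real (cnt v) *\<^sub>R bvec_real (c v)) $ k = real N"
    by (simp add: N_def bvec_real_def of_nat_sum)
  have "rmod2v ((\<Sum>v\<in>S. real (cnt v) *\<^sub>R bvec_real (c v)) + e) $ k = rmod2 (real N + e $ k)"
    by (simp only: rmod2v_def vec_lambda_beta vector_add_component real_sum)
  also have "\<dots> = rmod2 (of_bool (odd N) + e $ k)"
    by (rule rmod2_of_nat_add)
  also have "\<dots> = rmod2v (bvec_real (\<Sum>v\<in>S. of_nat (cnt v) *s c v) + e) $ k"
    by (simp only: rmod2v_def bvec_real_def vec_lambda_beta vector_add_component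
        bit_sum even_of_nat_iff)
  finally show "rmod2v ((\<Sum>v\<in>S. real (cnt v) *\<^sub>R bvec_real (c v)) + e) $ k
      = rmod2v (bvec_real (\<Sum>v\<in>S. of_nat (cnt v) *s c v) + e) $ k" .
qed

lemma sum_of_nat_scaleR_bit:
  fixes cnt :: "'v::finite \<Rightarrow> nat"
  shows "(\<Sum>v\<in>UNIV. of_nat (cnt v) *s (c v :: bit^'n)) = (\<Sum>v\<in>{v. odd (cnt v)}. c v)"
  unfolding of_nat_bit_eq by (rule sum.mono_neutral_cong_right) auto

definition superposition :: "bit^'n^'m \<Rightarrow> bit^'p^'m \<Rightarrow> real \<Rightarrow> ('p \<Rightarrow> nat) \<Rightarrow> real^'n" where
  "superposition G H a cnt = (\<Sum>v\<in>UNIV. real (cnt v) *\<^sub>R xsig G H a v)"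

lemma scaleR_xsig_eq:
  assumes "a \<noteq> 0"
  shows "(1 / (2 * a)) *\<^sub>R xsig G H a u = bvec_real (cw G H u) - (\<chi> _. 1 / 2)"
  using assms by (simp add: xsig_def bvec_real_def vec_eq_iff field_simps)

lemma dinput_superposition:
  assumes "a \<noteq> 0"
  shows "dinput a (superposition G H a cnt + w) (\<Sum>v\<in>UNIV. cnt v)
       = rmod2v (bvec_real (synd H {v. odd (cnt v)} v* G) + (1 / (2 * a)) *\<^sub>R w)"
proof -
  have "(1 / (2 * a)) *\<^sub>R superposition G H a cnt
      = (\<Sum>v\<in>UNIV. real (cnt v) *\<^sub>R ((1 / (2 * a)) *\<^sub>R xsig G H a v))"
    by (simp add: superposition_def scaleR_sum_right)
  also have "\<dots> = (\<Sum>v\<in>UNIV. real (cnt v) *\<^sub>R bvec_real (cw G H v))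
      - (\<Sum>v\<in>UNIV. real (cnt v) *\<^sub>R (\<chi> _. 1 / 2))"
    by (simp add: scaleR_xsig_eq[OF assms] scaleR_right_diff_distrib sum_subtractf)
  also have "(\<Sum>v\<in>UNIV. real (cnt v) *\<^sub>R (\<chi> _. 1 / 2)) = (\<chi> _. real (\<Sum>v\<in>UNIV. cnt v) / 2)"
    by (simp add: vec_eq_iff sum_divide_distrib)
  finally have scaled: "(1 / (2 * a)) *\<^sub>R superposition G H a cnt
      = (\<Sum>v\<in>UNIV. real (cnt v) *\<^sub>R bvec_real (cw G H v)) - (\<chi> _. real (\<Sum>v\<in>UNIV. cnt v) / 2)" .
  then have "dinput a (superposition G H a cnt + w) (\<Sum>v\<in>UNIV. cnt v)
      = rmod2v ((\<Sum>v\<in>UNIV. real (cnt v) *\<^sub>R bvec_real (cw G H v)) + (1 / (2 * a)) *\<^sub>R w)"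
    unfolding dinput_def scaleR_add_right scaled by (simp add: algebra_simps)
  also have "\<dots> = rmod2v (bvec_real (\<Sum>v\<in>UNIV. of_nat (cnt v) *s cw G H v) + (1 / (2 * a)) *\<^sub>R w)"
    by (rule rmod2v_sum_bvec_real)
  also have "(\<Sum>v\<in>UNIV. of_nat (cnt v) *s cw G H v) = synd H {v. odd (cnt v)} v* G"
    by (simp add: synd_vector_matrix_mult sum_of_nat_scaleR_bit)
  finally show ?thesis .
qed

lemma superposition_residual:
  "(1 / 2) *\<^sub>R (superposition G H a cnt + w - (\<Sum>u\<in>{v. odd (cnt v)}. xsig G H a u))
     = superposition G H a (\<lambda>v. cnt v div 2) + (1 / 2) *\<^sub>R w"
proof -
  have "superposition G H a cnt
      = (\<Sum>v\<in>UNIV. (of_bool (odd (cnt v)) + 2 * real (cnt v div 2)) *\<^sub>R xsig G H a v)"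
    unfolding superposition_def by (simp only: flip: real_of_nat_parity_split)
  also have "\<dots> = (\<Sum>v\<in>UNIV. of_bool (odd (cnt v)) *\<^sub>R xsig G H a v)
      + 2 *\<^sub>R superposition G H a (\<lambda>v. cnt v div 2)"
    by (simp add: superposition_def scaleR_sum_right sum.distrib scaleR_add_left)
  also have "(\<Sum>v\<in>UNIV. of_bool (odd (cnt v)) *\<^sub>R xsig G H a v) = (\<Sum>u\<in>{v. odd (cnt v)}. xsig G H a u)"
    by (rule sum.mono_neutral_cong_right) auto
  finally show ?thesis by (simp add: algebra_simps)
qed

lemma phi_eqI:
  assumes G_inj: "inj (\<lambda>h. h v* G)" and synd_inj: "inj_on (synd H) {S. card S \<le> T}"
    and card_S: "card S \<le> T" and decoded: "D (dinput a y t) = Some (synd H S v* G)"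
  shows "phi D G H T a y t = S"
proof -
  have "\<exists>!h. h v* G = synd H S v* G" and "(THE h. h v* G = synd H S v* G) = synd H S"
    using G_inj by (auto dest: injD)
  moreover have "\<exists>!S'. card S' \<le> T \<and> synd H S' = synd H S"
    using synd_inj card_S by (auto dest: inj_onD)
  moreover have "(THE S'. card S' \<le> T \<and> synd H S' = synd H S) = S"
    using synd_inj card_S by (intro the_equality) (auto dest: inj_onD)
  ultimately show ?thesis
    by (simp add: phi_def decoded)
qed

definition decodes_at :: "(real^'n \<Rightarrow> (bit^'n) option) \<Rightarrow> bit^'n^'m \<Rightarrow> real \<Rightarrow> real^'n
    \<Rightarrow> real^'n \<Rightarrow> nat \<Rightarrow> bool" where
  "decodes_at D G a z y t \<longleftrightarrow> (\<forall>c \<in> code G. \<forall>l::nat.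
     dinput a y t = rmod2v (bvec_real c + (1 / 2 ^ l) *\<^sub>R ((1 / (2 * a)) *\<^sub>R z))
     \<longrightarrow> D (dinput a y t) = Some c)"

definition decodes_along :: "(real^'n \<Rightarrow> (bit^'n) option) \<Rightarrow> bit^'n^'m \<Rightarrow> real \<Rightarrow> real^'n
    \<Rightarrow> ((real^'n) \<times> nat \<times> 'p set) list \<Rightarrow> bool" where
  "decodes_along D G a z tr \<longleftrightarrow> (\<forall>(y, t, _) \<in> set tr. decodes_at D G a z y t)"

lemma decodes_along_subset:
  "decodes_along D G a z tr \<Longrightarrow> set tr' \<subseteq> set tr \<Longrightarrow> decodes_along D G a z tr'"
  unfolding decodes_along_def by blast

lemma phi_superposition:
  fixes H :: "bit^'p^'m" and G :: "bit^'n^'m" and cnt :: "'p \<Rightarrow> nat"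
  assumes G_inj: "inj (\<lambda>h. h v* G)" and synd_inj: "inj_on (synd H) {S. card S \<le> T}"
    and "a \<noteq> 0"
    and y: "y = superposition G H a cnt + (1 / 2 ^ l) *\<^sub>R z" and t: "t = (\<Sum>v\<in>UNIV. cnt v)"
    and "t \<le> T" and "decodes_at D G a z y t"
  shows "phi D G H T a y t = {v. odd (cnt v)}"
proof (rule phi_eqI[OF G_inj synd_inj])
  show "card {v. odd (cnt v)} \<le> T"
    using sum_parity_split[of cnt] t \<open>t \<le> T\<close> by simp
  have "dinput a y t
      = rmod2v (bvec_real (synd H {v. odd (cnt v)} v* G) + (1 / 2 ^ l) *\<^sub>R ((1 / (2 * a)) *\<^sub>R z))"
    using dinput_superposition[OF \<open>a \<noteq> 0\<close>, of G H cnt "(1 / 2 ^ l) *\<^sub>R z"]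
    by (simp add: y t ac_simps)
  then show "D (dinput a y t) = Some (synd H {v. odd (cnt v)} v* G)"
    using \<open>decodes_at D G a z y t\<close> by (auto simp: decodes_at_def code_def)
qed

declare icr.simps [simp del]

lemma icr_head: "(y, t, phi D G H T a y t) \<in> set (fst (icr D G H T a y t))"
  by (subst icr.simps) (simp add: Let_def)

lemma decodes_along_icr_head:
  "decodes_along D G a z (fst (icr D G H T a y t)) \<Longrightarrow> decodes_at D G a z y t"
  using icr_head unfolding decodes_along_def by fastforce

lemma icr_stop:
  "card (phi D G H T a y t) = t \<Longrightarrow> icr D G H T a y t = ([(y, t, phi D G H T a y t)], True)"
  by (subst icr.simps) (simp add: Let_def)

lemma icr_continue:
  assumes "phi D G H T a y t = L" and "t = card L + 2 * t'" and "0 < t'"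
  shows "icr D G H T a y t
    = ((y, t, L) # fst (icr D G H T a ((1 / 2) *\<^sub>R (y - (\<Sum>u\<in>L. xsig G H a u))) t'),
       snd (icr D G H T a ((1 / 2) *\<^sub>R (y - (\<Sum>u\<in>L. xsig G H a u))) t'))"
proof -
  have "card L < t" and "even (t - card L)" and "(t - card L) div 2 = t'"
    using assms(2,3) by simp_all
  then show ?thesis
    by (subst icr.simps) (simp add: Let_def assms(1))
qed

lemma icr_noise_Cons:
  "icr_noise G H a y ((y0, t0, L) # rest)
     = 2 *\<^sub>R icr_noise G H a ((1 / 2) *\<^sub>R (y - (\<Sum>u\<in>L. xsig G H a u))) rest"
  unfolding icr_noise_def length_Cons sum.lessThan_Suc_shift
  by (simp add: scaleR_sum_right algebra_simps)

lemma icr_list_Cons: "icr_list ((y, t, L) # rest) = L - (\<Union>(_, _, L')\<in>set rest. L')"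
proof -
  have "{1..<length ((y, t, L) # rest)} = Suc ` {..<length rest}"
    by (simp add: image_Suc_lessThan atLeastLessThanSuc_atLeastAtMost)
  then have "(\<Union>l\<in>{1..<length ((y, t, L) # rest)}. snd (snd (((y, t, L) # rest) ! l)))
      = (\<Union>e\<in>set rest. snd (snd e))"
    by (auto simp: set_conv_nth)
  then show ?thesis
    by (simp add: icr_list_def case_prod_beta)
qed

lemma icr_superposition:
  fixes H :: "bit^'p^'m" and G :: "bit^'n^'m" and cnt :: "'p \<Rightarrow> nat"
  assumes synd_inj: "inj_on (synd H) {S. card S \<le> T}" and G_inj: "inj (\<lambda>h. h v* G)"
    and "a \<noteq> 0"
  shows "y = superposition G H a cnt + (1 / 2 ^ l) *\<^sub>R z \<Longrightarrow> t = (\<Sum>v\<in>UNIV. cnt v) \<Longrightarrow> t \<le> T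
    \<Longrightarrow> decodes_along D G a z (fst (icr D G H T a y t))
    \<Longrightarrow> \<exists>rest. icr D G H T a y t = ((y, t, {v. odd (cnt v)}) # rest, True)
          \<and> (\<forall>(_, _, L) \<in> set rest. L \<subseteq> {v. 2 \<le> cnt v})
          \<and> icr_noise G H a y ((y, t, {v. odd (cnt v)}) # rest) = (1 / 2 ^ l) *\<^sub>R z"
proof (induction t arbitrary: y cnt l rule: less_induct)
  case (less t)
  let ?L = "{v. odd (cnt v)}"
  define half where "half = (\<lambda>v. cnt v div 2)"
  define y' where "y' = (1 / 2) *\<^sub>R (y - (\<Sum>u\<in>?L. xsig G H a u))"
  define t' where "t' = (\<Sum>v\<in>UNIV. half v)"
  have t: "t = card ?L + 2 * t'"
    using sum_parity_split[of cnt] by (simp add: less.prems(2) t'_def half_def)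
  have y': "y' = superposition G H a half + (1 / 2 ^ Suc l) *\<^sub>R z"
    using superposition_residual[of G H a cnt "(1 / 2 ^ l) *\<^sub>R z"]
    by (simp add: y'_def half_def less.prems(1))
  have phi: "phi D G H T a y t = ?L"
    using phi_superposition[OF G_inj synd_inj \<open>a \<noteq> 0\<close> less.prems(1-3)]
      decodes_along_icr_head[OF less.prems(4)] .
  show ?case
  proof (cases "t' = 0")
    case True
    then have "superposition G H a half = 0"
      by (simp add: t'_def superposition_def)
    with y' have "y' = (1 / 2 ^ Suc l) *\<^sub>R z"
      by simp
    then show ?thesis
      using icr_stop[of D G H T a y t] phi t True
      unfolding icr_noise_Cons y'_def[symmetric] by (simp add: icr_noise_def)
  next
    case False
    define r where "r = icr D G H T a y' t'"
    have icr: "icr D G H T a y t = ((y, t, ?L) # fst r, snd r)"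
      using icr_continue[OF phi t] False by (simp add: r_def y'_def)
    have "decodes_along D G a z (fst r)"
      using less.prems(4) by (rule decodes_along_subset) (simp add: icr subset_insertI)
    moreover have "t' < t" and "t' \<le> T"
      using t False less.prems(3) by simp_all
    ultimately obtain rest where r: "r = ((y', t', {v. odd (half v)}) # rest, True)"
      and rest: "\<forall>(_, _, L) \<in> set rest. L \<subseteq> {v. 2 \<le> half v}"
      and noise: "icr_noise G H a y' ((y', t', {v. odd (half v)}) # rest) = (1 / 2 ^ Suc l) *\<^sub>R z"
      using less.IH[OF _ y' t'_def] unfolding r_def by blast
    have "{v. odd (half v)} \<subseteq> {v. 2 \<le> cnt v}" and "{v. 2 \<le> half v} \<subseteq> {v. 2 \<le> cnt v}"
      by (auto simp: half_def dest!: odd_pos)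
    with rest have "\<forall>(_, _, L) \<in> set (fst r). L \<subseteq> {v. 2 \<le> cnt v}"
      unfolding r by force
    moreover have "icr_noise G H a y ((y, t, ?L) # fst r) = (1 / 2 ^ l) *\<^sub>R z"
      unfolding icr_noise_Cons y'_def[symmetric] using noise by (simp add: r)
    ultimately show ?thesis
      by (simp add: icr r)
  qed
qed

lemma sum_comp_eq_sum_fibre_card:
  fixes f :: "'i \<Rightarrow> 'v::finite" and g :: "'v \<Rightarrow> 'a::real_vector"
  assumes "finite A"
  shows "(\<Sum>i\<in>A. g (f i)) = (\<Sum>v\<in>UNIV. real (card {i\<in>A. f i = v}) *\<^sub>R g v)"
proof -
  have "(\<Sum>i\<in>A. g (f i)) = (\<Sum>v\<in>UNIV. \<Sum>i\<in>{i\<in>A. f i = v}. g (f i))"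
    using assms by (intro sum.group[symmetric]) simp_all
  also have "\<dots> = (\<Sum>v\<in>UNIV. \<Sum>i\<in>{i\<in>A. f i = v}. g v)"
    by (intro sum.cong) simp_all
  finally show ?thesis by (simp add: sum_constant_scaleR)
qed

lemma card_eq_sum_fibre_card:
  fixes f :: "'i \<Rightarrow> 'v::finite"
  assumes "finite A"
  shows "card A = (\<Sum>v\<in>UNIV. card {i\<in>A. f i = v})"
  using assms sum.group[of A UNIV f "\<lambda>_. 1::nat"] by simp

theorem theorem1:
  fixes H :: "bit^'p^'m" and G :: "bit^'n^'m" and d :: nat and a :: real
    and D :: "real^'n \<Rightarrow> (bit^'n) option"
    and A :: "'i set" and uu :: "'i \<Rightarrow> 'p" and z :: "real^'n"
  assumes dist: "is_min_dist H d"
    and rankG: "rank G = CARD('m)"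
    and apos: "a > 0"
    and finA: "finite A"
    and noE1: "card A \<le> (d - 1) div 2"
    and noE2: "\<forall>(yl, tl, Ll) \<in> set (fst (icr D G H ((d - 1) div 2) a
                   ((\<Sum>i\<in>A. xsig G H a (uu i)) + z) (card A))).
                 \<forall>c \<in> code G. \<forall>l::nat.
                   dinput a yl tl = rmod2v (bvec_real c + (1 / 2 ^ l) *\<^sub>R ((1 / (2 * a)) *\<^sub>R z))
                   \<longrightarrow> D (dinput a yl tl) = Some c"
  shows "snd (icr D G H ((d - 1) div 2) a ((\<Sum>i\<in>A. xsig G H a (uu i)) + z) (card A))
     \<and> {v. card {i\<in>A. uu i = v} = 1}
         \<subseteq> icr_list (fst (icr D G H ((d - 1) div 2) a ((\<Sum>i\<in>A. xsig G H a (uu i)) + z) (card A)))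
     \<and> icr_noise G H a ((\<Sum>i\<in>A. xsig G H a (uu i)) + z)
         (fst (icr D G H ((d - 1) div 2) a ((\<Sum>i\<in>A. xsig G H a (uu i)) + z) (card A))) = z"
proof -
  define y where "y = (\<Sum>i\<in>A. xsig G H a (uu i)) + z"
  define cnt where "cnt = (\<lambda>v. card {i\<in>A. uu i = v})"
  have y_cnt: "y = superposition G H a cnt + (1 / 2 ^ 0) *\<^sub>R z"
    by (simp add: y_def superposition_def cnt_def sum_comp_eq_sum_fibre_card[OF finA])
  have card_cnt: "card A = (\<Sum>v\<in>UNIV. cnt v)"
    unfolding cnt_def by (rule card_eq_sum_fibre_card[OF finA])
  have synd_inj: "inj_on (synd H) {S. card S \<le> (d - 1) div 2}"
    using dist by (intro synd_inj_on) (simp add: is_min_dist_def)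
  obtain B where "G ** B = mat 1"
    using full_rank_imp_right_invertible[OF rankG] ..
  then have G_inj: "inj (\<lambda>h. h v* G)"
    by (rule inj_vector_matrix_mult_if_right_invertible)
  have "decodes_along D G a z (fst (icr D G H ((d - 1) div 2) a y (card A)))"
    using noE2 unfolding decodes_along_def decodes_at_def y_def .
  then obtain rest
    where icr: "icr D G H ((d - 1) div 2) a y (card A) = ((y, card A, {v. odd (cnt v)}) # rest, True)"
      and rest: "\<forall>(_, _, L) \<in> set rest. L \<subseteq> {v. 2 \<le> cnt v}"
      and noise: "icr_noise G H a y ((y, card A, {v. odd (cnt v)}) # rest) = z"
    using icr_superposition[OF synd_inj G_inj _ y_cnt card_cnt noE1] apos by auto
  have "{v. cnt v = 1} \<subseteq> {v. odd (cnt v)} - (\<Union>(_, _, L) \<in> set rest. L)"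
    using rest by fastforce
  then show ?thesis
    unfolding y_def[symmetric] icr fst_conv snd_conv icr_list_Cons
    using noise by (simp add: cnt_def)
qed

end
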